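(* The following density statements hold, both with respect to the norm $\|\cdot\|$: \begin{itemize} \item the invertible elements of $B_0$ are dense in $B_0$; \item the selfadjoint (real valued) invertible elements of $B_0$ are dense in the set of all selfadjoint elements of $B_0$. \end{itemize}
   Context: Let $\mathbb{N} = \{1, 2, \dots\}$ and let $B = C_0(\mathbb{N})^+ = \{a \in \ell^\infty(\mathbb{N}) : \lim_{n\to\infty} a(n) \text{ exists}\}$, with the supremum norm $\|\cdot\|_\infty$ and pointwise operations. Let $\lambda(a) = \lim_{n\to\infty} a(n)$ for $a \in B$. Define \[ B_0 = \{a \in B : \lim_{n\to\infty} n[a(n) - \lambda(a)] \text{ exists}\}. \] For $a \in B_0$, set \[ \|a\|_\omega = \sup_{n \in \mathbb{N}} n|a(n) - \lambda(a)| \quad\text{and}\quad \|a\| = \|a\|_\infty + \|a\|_\omega . \] $B_0$ is a unital Banach *-algebra in $\|\cdot\|$, with pointwise operations and the involution $a^*(n) = \overline{a(n)}$. *)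

theory Defs
  imports "HOL-Analysis.Analysis"
begin

text \<open>Elements of B_0 are represented as sequences a :: nat => complex, where the
  value a k represents the paper's a(k+1) (index shift, so that index 0 corresponds
  to the paper's n = 1). Hence the weight n becomes real (Suc k).\<close>

definition lam :: "(nat \<Rightarrow> complex) \<Rightarrow> complex" where
  "lam a = lim a"

definition B0 :: "(nat \<Rightarrow> complex) set" where
  "B0 = {a. convergent a \<and> convergent (\<lambda>k. of_nat (Suc k) * (a k - lam a))}"

definition norm_inf :: "(nat \<Rightarrow> complex) \<Rightarrow> real" where
  "norm_inf a = (SUP k. cmod (a k))"

definition norm_om :: "(nat \<Rightarrow> complex) \<Rightarrow> real" where
  "norm_om a = (SUP k. real (Suc k) * cmod (a k - lam a))"

definition B0norm :: "(nat \<Rightarrow> complex) \<Rightarrow> real" where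
  "B0norm a = norm_inf a + norm_om a"

definition B0star :: "(nat \<Rightarrow> complex) \<Rightarrow> (nat \<Rightarrow> complex)" where
  "B0star a = (\<lambda>k. cnj (a k))"

definition B0_selfadjoint :: "(nat \<Rightarrow> complex) \<Rightarrow> bool" where
  "B0_selfadjoint a \<longleftrightarrow> B0star a = a"

definition B0_invertible :: "(nat \<Rightarrow> complex) \<Rightarrow> bool" where
  "B0_invertible a \<longleftrightarrow> a \<in> B0 \<and> (\<exists>b\<in>B0. (\<lambda>k. a k * b k) = (\<lambda>k. 1) \<and> (\<lambda>k. b k * a k) = (\<lambda>k. 1))"

end

theory Submission
  imports Defs
begin

text \<open>A sequence in B0 that vanishes neither at any index nor in the limit is invertible in B0:
  the weighted deviation of its pointwise inverse is its own weighted deviation divided by a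
  convergent sequence with nonzero limit. Adding a real constant d preserves membership in B0
  and self-adjointness, leaves the weighted deviation unchanged, and moves the element by
  exactly |d| in norm. Only countably many d make the shifted sequence vanish somewhere, so
  arbitrarily small admissible d exist.\<close>

lemma lam_eqI: "X \<longlonglongrightarrow> L \<Longrightarrow> lam X = L"
  unfolding lam_def by (rule limI)

lemma convergent_LIMSEQ_lam: "convergent X \<Longrightarrow> X \<longlonglongrightarrow> lam X"
  unfolding lam_def by (simp add: convergent_LIMSEQ_iff)

lemma lam_add_const: "a \<in> B0 \<Longrightarrow> lam (\<lambda>k. a k + c) = lam a + c"
  unfolding B0_def by (auto intro!: lam_eqI tendsto_add convergent_LIMSEQ_lam)

lemma B0_add_const:
  assumes "a \<in> B0"
  shows "(\<lambda>k. a k + c) \<in> B0"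
proof -
  have "(\<lambda>k. a k + c) \<longlonglongrightarrow> lam a + c"
    using assms unfolding B0_def by (auto intro!: tendsto_add convergent_LIMSEQ_lam)
  then show ?thesis
    using assms unfolding B0_def by (simp add: lam_add_const[OF assms] convergentI)
qed

lemma B0_inverse:
  assumes aB: "a \<in> B0" and nz: "\<And>k. a k \<noteq> 0" and nzL: "lam a \<noteq> 0"
  shows "(\<lambda>k. 1 / a k) \<in> B0"
proof -
  define L where "L = lam a"
  have "L \<noteq> 0"
    using nzL by (simp add: L_def)
  have aL: "a \<longlonglongrightarrow> L"
    using aB by (simp add: B0_def L_def convergent_LIMSEQ_lam)
  obtain W where W: "(\<lambda>k. of_nat (Suc k) * (a k - L)) \<longlonglongrightarrow> W"
    using aB by (auto simp: B0_def L_def convergent_def)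
  have inv_lim: "(\<lambda>k. 1 / a k) \<longlonglongrightarrow> 1 / L"
    using aL \<open>L \<noteq> 0\<close> by (auto intro!: tendsto_divide)
  have "(\<lambda>k. - (of_nat (Suc k) * (a k - L)) / (a k * L)) \<longlonglongrightarrow> - W / (L * L)"
    using \<open>L \<noteq> 0\<close> by (intro tendsto_divide tendsto_minus W tendsto_mult aL tendsto_const) simp
  moreover have "of_nat (Suc k) * (1 / a k - 1 / L) = - (of_nat (Suc k) * (a k - L)) / (a k * L)"
    for k
    using nz[of k] \<open>L \<noteq> 0\<close> by (simp add: field_simps)
  ultimately have "(\<lambda>k. of_nat (Suc k) * (1 / a k - lam (\<lambda>k. 1 / a k))) \<longlonglongrightarrow> - W / (L * L)"
    by (simp add: lam_eqI[OF inv_lim])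
  then show ?thesis
    using inv_lim unfolding B0_def convergent_def by blast
qed

lemma B0_invertibleI:
  assumes "a \<in> B0" and "\<And>k. a k \<noteq> 0" and "lam a \<noteq> 0"
  shows "B0_invertible a"
  unfolding B0_invertible_def
  using assms B0_inverse[OF assms] by (intro conjI bexI[of _ "\<lambda>k. 1 / a k"]) auto

lemma B0norm_const: "B0norm (\<lambda>k. c) = cmod c"
  by (simp add: B0norm_def norm_inf_def norm_om_def lam_eqI[OF tendsto_const])

lemma B0_selfadjoint_add_real:
  "B0_selfadjoint a \<Longrightarrow> B0_selfadjoint (\<lambda>k. a k + of_real d)"
  unfolding B0_selfadjoint_def B0star_def by (simp add: fun_eq_iff)

lemma countable_avoid_small_positive:
  fixes S :: "real set" and e :: real
  assumes "countable S" and "e > 0"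
  obtains d where "0 < d" "d < e" "d \<notin> S"
proof -
  have "\<not> {0<..<e} \<subseteq> S"
    using assms countable_subset uncountable_open_interval by blast
  then obtain d where "d \<in> {0<..<e}" "d \<notin> S"
    by blast
  then show ?thesis
    using that by simp blast
qed

lemma B0_invertible_small_real_shift:
  assumes aB: "a \<in> B0" and "e > 0"
  obtains d where "0 < d" "d < e" "B0_invertible (\<lambda>k. a k + of_real d)"
proof -
  let ?S = "(\<lambda>z. - Re z) ` insert (lam a) (range a)"
  have "countable ?S"
    by simp
  then obtain d where d: "0 < d" "d < e" "d \<notin> ?S"
    using \<open>e > 0\<close> by (rule countable_avoid_small_positive)
  have "z + of_real d \<noteq> 0" if "z \<in> insert (lam a) (range a)" for z
  proof
    assume "z + of_real d = 0"
    then have "Re z + d = 0"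
      by (metis Re_complex_of_real plus_complex.sel(1) zero_complex.sel(1))
    then have "d = - Re z"
      by simp
    then show False
      using d(3) that by blast
  qed
  then have "B0_invertible (\<lambda>k. a k + of_real d)"
    using aB by (intro B0_invertibleI B0_add_const) (simp_all add: lam_add_const)
  then show ?thesis
    using that d by blast
qed

theorem proposition4p11:
  shows "(\<forall>a\<in>B0. \<forall>\<epsilon>>0. \<exists>b. B0_invertible b \<and> B0norm (\<lambda>k. a k - b k) < \<epsilon>)
       \<and> (\<forall>a\<in>B0. B0_selfadjoint a \<longrightarrow> (\<forall>\<epsilon>>0. \<exists>b. B0_selfadjoint b \<and> B0_invertible b
              \<and> B0norm (\<lambda>k. a k - b k) < \<epsilon>))"
proof (intro conjI ballI allI impI)
  fix a :: "nat \<Rightarrow> complex" and e :: real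
  assume "a \<in> B0" and "e > 0"
  then obtain d where d: "0 < d" "d < e" and inv: "B0_invertible (\<lambda>k. a k + of_real d)"
    by (rule B0_invertible_small_real_shift)
  have close: "B0norm (\<lambda>k. a k - (a k + of_real d)) < e"
    using B0norm_const[of "- of_real d"] d by simp
  show "\<exists>b. B0_invertible b \<and> B0norm (\<lambda>k. a k - b k) < e"
    using inv close by blast
  assume "B0_selfadjoint a"
  then show "\<exists>b. B0_selfadjoint b \<and> B0_invertible b \<and> B0norm (\<lambda>k. a k - b k) < e"
    using B0_selfadjoint_add_real inv close by blast
qed

end
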